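(* Let $a$ be a non-degenerate arrow environment, let $x,y\in\mathbb Z_+$ and $l\ge1$. If the process $Z^+$ on $a$ with initial value $Z^+_0=x$ satisfies $Z^+_l\ge y$, then the process $Z^-$ on the shifted arrow environment $\theta^{l-1}a$ with initial value $Z^-_0=y$ satisfies $Z^-_l\le x$.
   Context: Notation: $\mathbb N=\{1,2,\dots\}$, $\mathbb Z_+=\{0,1,2,\dots\}$. An arrow environment is $a\in\{0,1\}^{\mathbb Z\times\mathbb N}$; for $z\in\mathbb Z$, $(\theta^z a)(x,i)=a(x+z,i)$. A sequence $b\in\{0,1\}^{\mathbb N}$ is non-degenerate if $b(i)\ne b(i+1)$ for infinitely many $i$; $a$ is non-degenerate if every $a(x,\cdot)$ is. For non-degenerate $b$: $U^+_b(0)=0$ and for $x\ge1$, $U^+_b(x)$ is the number of indices $i$ with $b(i)=1$ that precede the $x$-th index $j$ with $b(j)=0$; $U^-_b(x)$ is defined the same way with the roles of $0$ and $1$ exchanged. For non-degenerate $a$ and $y\in\mathbb Z_+$, the processes on $a$ with initial value $y$ are $Z^+_0=y$, $Z^+_n=U^+_{a(n-1,\cdot)}(Z^+_{n-1})$ and $Z^-_0=y$, $Z^-_n=U^-_{a(1-n,\cdot)}(Z^-_{n-1})$ for $n\ge1$. *)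

theory Defs
  imports Main
begin

text \<open>Arrow environments: a value 1 is encoded as True, 0 as False.
  Only indices i \<ge> 1 of a sequence b :: nat \<Rightarrow> bool are meaningful (index set N = {1,2,...}).\<close>

type_synonym arrow_env = "int \<Rightarrow> nat \<Rightarrow> bool"

definition nondeg_seq :: "(nat \<Rightarrow> bool) \<Rightarrow> bool" where
  "nondeg_seq b \<longleftrightarrow> infinite {i. 1 \<le> i \<and> b i \<noteq> b (Suc i)}"

definition nondeg_env :: "arrow_env \<Rightarrow> bool" where
  "nondeg_env a \<longleftrightarrow> (\<forall>x. nondeg_seq (a x))"

definition shift :: "int \<Rightarrow> arrow_env \<Rightarrow> arrow_env" where
  "shift z a = (\<lambda>x i. a (x + z) i)"

definition nth_index :: "(nat \<Rightarrow> bool) \<Rightarrow> bool \<Rightarrow> nat \<Rightarrow> nat" where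
  "nth_index b v x = (THE j. 1 \<le> j \<and> b j = v \<and> card {k. 1 \<le> k \<and> k \<le> j \<and> b k = v} = x)"

definition U :: "(nat \<Rightarrow> bool) \<Rightarrow> bool \<Rightarrow> nat \<Rightarrow> nat" where
  "U b v x = (if x = 0 then 0
     else card {i. 1 \<le> i \<and> i < nth_index b (\<not> v) x \<and> b i = v})"

definition Uplus :: "(nat \<Rightarrow> bool) \<Rightarrow> nat \<Rightarrow> nat" where
  "Uplus b = U b True"

definition Uminus :: "(nat \<Rightarrow> bool) \<Rightarrow> nat \<Rightarrow> nat" where
  "Uminus b = U b False"

primrec Zplus :: "arrow_env \<Rightarrow> nat \<Rightarrow> nat \<Rightarrow> nat" where
  "Zplus a y 0 = y"
| "Zplus a y (Suc n) = Uplus (a (int n)) (Zplus a y n)"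

primrec Zminus :: "arrow_env \<Rightarrow> nat \<Rightarrow> nat \<Rightarrow> nat" where
  "Zminus a y 0 = y"
| "Zminus a y (Suc n) = Uminus (a (1 - int (Suc n))) (Zminus a y n)"

end

theory Submission
  imports Defs
begin

text \<open>For a single sequence b the two maps are dual: if U+ b x \<ge> y, then the y-th 1 of b comes
  before the x-th 0, so fewer than x zeros precede it, i.e. U- b y \<le> x.
  The process Z- on the shifted environment visits the columns a(l-1), ..., a(0), i.e. those of
  Z+ in reverse order, so applying the duality column by column keeps Z-(k) below Z+(l - k).\<close>

definition count_upto :: "(nat \<Rightarrow> bool) \<Rightarrow> bool \<Rightarrow> nat \<Rightarrow> nat" where
  "count_upto b v t = card {k. 1 \<le> k \<and> k \<le> t \<and> b k = v}"

lemma finite_bounded_nat_set: "finite {k::nat. 1 \<le> k \<and> k \<le> t \<and> P k}"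
  by (rule finite_subset[of _ "{..t}"]) auto

lemma count_upto_0 [simp]: "count_upto b v 0 = 0"
  unfolding count_upto_def by simp

lemma count_upto_Suc:
  "count_upto b v (Suc t) = count_upto b v t + (if b (Suc t) = v then 1 else 0)"
proof -
  have "{k. 1 \<le> k \<and> k \<le> Suc t \<and> b k = v} =
        {k. 1 \<le> k \<and> k \<le> t \<and> b k = v} \<union> (if b (Suc t) = v then {Suc t} else {})"
    by (auto simp: le_Suc_eq)
  then show ?thesis
    unfolding count_upto_def using finite_bounded_nat_set[of t "\<lambda>k. b k = v"]
    by (auto simp: card_insert_if)
qed

lemma count_upto_mono: "s \<le> t \<Longrightarrow> count_upto b v s \<le> count_upto b v t"
  unfolding count_upto_def by (rule card_mono[OF finite_bounded_nat_set]) auto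

lemma count_upto_strict_mono:
  assumes "s < t" and "b t = v"
  shows "count_upto b v s < count_upto b v t"
proof -
  obtain r where t: "t = Suc r" and "s \<le> r" using assms(1) by (cases t) auto
  have "count_upto b v s \<le> count_upto b v r" using \<open>s \<le> r\<close> by (rule count_upto_mono)
  then show ?thesis using assms(2) by (simp add: t count_upto_Suc)
qed

lemma U_eq_count_upto: "1 \<le> x \<Longrightarrow> U b v x = count_upto b v (nth_index b (\<not> v) x - 1)"
  unfolding U_def count_upto_def by (auto intro: arg_cong[where f = card])

lemma nondeg_seq_infinite_values:
  assumes "nondeg_seq b"
  shows "infinite {i. 1 \<le> i \<and> b i = v}"
proof
  assume "finite {i. 1 \<le> i \<and> b i = v}"
  then obtain N where "\<forall>i \<in> {i. 1 \<le> i \<and> b i = v}. i \<le> N"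
    unfolding finite_nat_set_iff_bounded_le ..
  then have N: "\<And>i. 1 \<le> i \<Longrightarrow> b i = v \<Longrightarrow> i \<le> N" by blast
  have "b i = b (Suc i)" if "N < i" for i
    using N[of i] N[of "Suc i"] that by (cases "b i = v") auto
  then have "{i. 1 \<le> i \<and> b i \<noteq> b (Suc i)} \<subseteq> {..N}"
    using not_le by blast
  then show False
    using assms finite_subset[OF _ finite_atMost] unfolding nondeg_seq_def by blast
qed

lemma count_upto_unbounded:
  assumes "nondeg_seq b"
  shows "\<exists>t. x \<le> count_upto b v t"
proof (induction x)
  case 0 then show ?case by simp
next
  case (Suc x)
  then obtain t where t: "x \<le> count_upto b v t" by blast
  obtain i where "t < i" "b i = v"
    using nondeg_seq_infinite_values[OF assms, of v]
    unfolding finite_nat_set_iff_bounded_le by (auto simp: not_le)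
  then have "count_upto b v t < count_upto b v i" by (rule count_upto_strict_mono)
  then show ?case using t by (intro exI[of _ i]) simp
qed

text \<open>Since the count grows in steps of at most one, the least t at which it reaches x
  is a position of the value v where it equals x.\<close>

lemma count_upto_hits:
  assumes "nondeg_seq b" and "1 \<le> x"
  obtains t where "1 \<le> t" "b t = v" "count_upto b v t = x"
proof -
  define t where "t = (LEAST t. x \<le> count_upto b v t)"
  have reached: "x \<le> count_upto b v t"
    unfolding t_def using count_upto_unbounded[OF assms(1)] by (rule LeastI_ex)
  then obtain s where s: "t = Suc s" using assms(2) by (cases t) auto
  have "s < t" using s by simp
  then have "\<not> x \<le> count_upto b v s"
    unfolding t_def by (rule not_less_Least)
  with reached have "b t = v" and "count_upto b v t = x"
    by (auto simp: s count_upto_Suc split: if_splits)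
  then show ?thesis using that[of t] s by simp
qed

lemma nth_index_eqI:
  assumes "1 \<le> t" and "b t = v" and "count_upto b v t = x"
  shows "nth_index b v x = t"
  unfolding nth_index_def
proof (rule the_equality)
  show "1 \<le> t \<and> b t = v \<and> card {k. 1 \<le> k \<and> k \<le> t \<and> b k = v} = x"
    using assms unfolding count_upto_def by simp
next
  fix j assume j: "1 \<le> j \<and> b j = v \<and> card {k. 1 \<le> k \<and> k \<le> j \<and> b k = v} = x"
  then have "count_upto b v j = count_upto b v t" using assms(3) unfolding count_upto_def by simp
  then show "j = t"
    using count_upto_strict_mono[of j t b v] count_upto_strict_mono[of t j b v] j assms(2)
    by (cases j t rule: linorder_cases) auto
qed

lemma nth_index_spec:
  assumes "nondeg_seq b" and "1 \<le> x"
  shows "b (nth_index b v x) = v" and "count_upto b v (nth_index b v x) = x"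
proof -
  obtain t where "1 \<le> t" "b t = v" "count_upto b v t = x"
    using count_upto_hits[OF assms] .
  moreover from this have "nth_index b v x = t" by (rule nth_index_eqI)
  ultimately show "b (nth_index b v x) = v" and "count_upto b v (nth_index b v x) = x" by simp_all
qed

lemma Uminus_le_if_Uplus_ge:
  assumes nondeg: "nondeg_seq b" and ge: "y \<le> Uplus b x"
  shows "Uminus b y \<le> x"
proof (cases "y = 0")
  case True then show ?thesis by (simp add: Uminus_def U_def)
next
  case False
  then have "1 \<le> y" by simp
  have "1 \<le> x" using ge False by (cases "x = 0") (auto simp: Uplus_def U_def)
  define j where "j = nth_index b False x"
  define m where "m = nth_index b True y"
  have x_eq: "count_upto b False j = x"
    unfolding j_def using nth_index_spec(2)[OF nondeg \<open>1 \<le> x\<close>] .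
  have "b m" and y_eq: "count_upto b True m = y"
    unfolding m_def using nth_index_spec[OF nondeg \<open>1 \<le> y\<close>, of True] by simp_all
  then have "m \<noteq> 0" using \<open>1 \<le> y\<close> by (cases m) auto
  have y_le: "y \<le> count_upto b True (j - 1)"
    using ge \<open>1 \<le> x\<close> by (simp add: Uplus_def U_eq_count_upto j_def)
  have "m < j"
  proof (rule ccontr)
    assume "\<not> m < j"
    then have "count_upto b True (j - 1) < count_upto b True m"
      using \<open>b m\<close> \<open>m \<noteq> 0\<close> by (intro count_upto_strict_mono) auto
    then show False using y_le y_eq by simp
  qed
  have "Uminus b y = count_upto b False (m - 1)"
    using \<open>1 \<le> y\<close> by (simp add: Uminus_def U_eq_count_upto m_def)
  also have "\<dots> \<le> count_upto b False j"
    using \<open>m < j\<close> by (intro count_upto_mono) simp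
  finally show ?thesis using x_eq by simp
qed

lemma Zminus_shift_le_Zplus:
  assumes nondeg: "nondeg_env a" and "y \<le> Zplus a x l" and "k \<le> l"
  shows "Zminus (shift (int l - 1) a) y k \<le> Zplus a x (l - k)"
  using \<open>k \<le> l\<close>
proof (induction k)
  case 0 then show ?case using assms(2) by simp
next
  case (Suc k)
  let ?col = "a (int (l - Suc k))"
  have col: "shift (int l - 1) a (1 - int (Suc k)) = ?col"
    using Suc.prems unfolding shift_def by (simp add: algebra_simps)
  have "l - k = Suc (l - Suc k)" using Suc.prems by simp
  moreover have "Zminus (shift (int l - 1) a) y k \<le> Zplus a x (l - k)" using Suc by simp
  ultimately have "Zminus (shift (int l - 1) a) y k \<le> Uplus ?col (Zplus a x (l - Suc k))"
    by (simp only: Zplus.simps)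
  then have "Uminus ?col (Zminus (shift (int l - 1) a) y k) \<le> Zplus a x (l - Suc k)"
    using nondeg unfolding nondeg_env_def by (blast intro: Uminus_le_if_Uplus_ge)
  then show ?case by (simp only: Zminus.simps col)
qed

theorem lemma2p6:
  fixes a :: arrow_env and x y l :: nat
  assumes "nondeg_env a" and "1 \<le> l" and "Zplus a x l \<ge> y"
  shows "Zminus (shift (int l - 1) a) y l \<le> x"
  using Zminus_shift_le_Zplus[OF assms(1) assms(3), of l] by simp

end
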